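(* Assume $\mathfrak{b}<\mathfrak{q}$. Then there exists a compact Hausdorff sequentially separable space which is not selectively sequentially separable.
   Context: $\mathfrak{b}$ is the least cardinality of a subset of $\mathbb{N}^{\mathbb{N}}$ unbounded with respect to $\leq^*$, where $f\leq^* g$ means $f(n)\leq g(n)$ for all but finitely many $n$. A $Q$-set is a subset of $\mathbb{R}$ every subset of which is a $G_\delta$ in it; $\mathfrak{q}$ is the least cardinal $\lambda$ such that there is no $Q$-set of size $\lambda$ (equivalently, the smallest cardinal such that for every $\kappa<\mathfrak{q}$ there is a $Q$-set of size $\kappa$). A space is sequentially separable if it has a countable sequentially dense subset (every point is a limit of a sequence from it). A space $Z$ is selectively sequentially separable if for every sequence $(D_n:n\in\mathbb{N})$ of sequentially dense subsets of $Z$ one can choose finite $F_n\subseteq D_n$ so that $\bigcup_n F_n$ is sequentially dense in $Z$. *)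

theory Defs
  imports "HOL-Analysis.Analysis"
begin

definition le_star :: "(nat \<Rightarrow> nat) \<Rightarrow> (nat \<Rightarrow> nat) \<Rightarrow> bool" where
  "le_star f g \<longleftrightarrow> (\<forall>\<^sub>F n in sequentially. f n \<le> g n)"

definition unbounded_family :: "(nat \<Rightarrow> nat) set \<Rightarrow> bool" where
  "unbounded_family F \<longleftrightarrow> \<not> (\<exists>g. \<forall>f\<in>F. le_star f g)"

definition Q_set :: "real set \<Rightarrow> bool" where
  "Q_set X \<longleftrightarrow> (\<forall>A\<subseteq>X. \<exists>U :: nat \<Rightarrow> real set.
      (\<forall>n. open (U n)) \<and> A = X \<inter> (\<Inter>n. U n))"

text \<open>b < q: with F an unbounded family of least cardinality (|F| = b),
  every cardinal \<lambda> \<le> b is the size of some Q-set (q being the least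
  cardinal with no Q-set of that size).\<close>
definition b_less_q :: bool where
  "b_less_q \<longleftrightarrow> (\<exists>F :: (nat \<Rightarrow> nat) set. unbounded_family F \<and>
      (\<forall>G. unbounded_family G \<longrightarrow> (card_of F, card_of G) \<in> ordLeq) \<and>
      (\<forall>Y :: (nat \<Rightarrow> nat) set. (card_of Y, card_of F) \<in> ordLeq \<longrightarrow>
          (\<exists>X :: real set. Q_set X \<and> (card_of X, card_of Y) \<in> ordIso)))"

definition seq_dense :: "'a topology \<Rightarrow> 'a set \<Rightarrow> bool" where
  "seq_dense T D \<longleftrightarrow> D \<subseteq> topspace T \<and>
     (\<forall>x\<in>topspace T. \<exists>s. (\<forall>n. s n \<in> D) \<and> limitin T s x sequentially)"

definition seq_separable :: "'a topology \<Rightarrow> bool" where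
  "seq_separable T \<longleftrightarrow> (\<exists>D. countable D \<and> seq_dense T D)"

definition selectively_seq_separable :: "'a topology \<Rightarrow> bool" where
  "selectively_seq_separable T \<longleftrightarrow>
     (\<forall>D :: nat \<Rightarrow> 'a set. (\<forall>n. seq_dense T (D n)) \<longrightarrow>
        (\<exists>F :: nat \<Rightarrow> 'a set. (\<forall>n. finite (F n) \<and> F n \<subseteq> D n) \<and>
            seq_dense T (\<Union>n. F n)))"

end

theory Submission
  imports Defs
begin

text \<open>
  Let X be a Q-set of size b and consider the Cantor cube \<open>2\<^sup>X\<close>, which is compact
  Hausdorff. Every subset of X is relatively G-delta, hence coded by countably many
  open sets, i.e. by a real; so \<open>2\<^sup>X\<close> has at most continuum many points and can be moved
  onto a topology on the reals.

  Sequential separability: if \<open>A = X \<inter> \<Inter>U\<^sub>n\<close> and \<open>X - A = X \<inter> \<Inter>V\<^sub>n\<close> with open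
  \<open>U\<^sub>n, V\<^sub>n\<close>, and \<open>W\<^sup>k\<close> denotes the union of those among the first k basic open sets that
  lie in W, then the sets \<open>{x. \<exists>m\<le>k. x \<notin> V\<^sub>m\<^sup>k \<and> (\<forall>j\<le>m. x \<in> U\<^sub>j\<^sup>k)}\<close> converge
  pointwise on X to A, and there are only countably many such sets.

  Failure of selective sequential separability: index an unbounded family as
  \<open>{e\<^sub>x : x \<in> X}\<close>. The nonzero points of the cube whose zero set Z makes
  \<open>e\<^sub>x(0), \<dots>, e\<^sub>x(n)\<close> bounded for \<open>x \<in> Z\<close> form a sequentially dense set \<open>D\<^sub>n\<close>. Finitely
  many points of \<open>D\<^sub>n\<close> share one bound \<open>c\<^sub>n\<close>, and a sequence from the selections
  converging to 0 would then bound every \<open>e\<^sub>x\<close> eventually by a single function.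
\<close>

lemma seq_dense_continuous_image:
  assumes f: "continuous_map X Y f" and surj: "f ` topspace X = topspace Y"
    and D: "seq_dense X D"
  shows "seq_dense Y (f ` D)"
  unfolding seq_dense_def
proof (intro conjI ballI)
  show "f ` D \<subseteq> topspace Y"
    using D surj unfolding seq_dense_def by auto
next
  fix y assume "y \<in> topspace Y"
  then obtain x where x: "x \<in> topspace X" "y = f x"
    using surj by auto
  then obtain s where s: "\<forall>n. s n \<in> D" "limitin X s x sequentially"
    using D unfolding seq_dense_def by auto
  have "limitin Y (f \<circ> s) y sequentially"
    using continuous_map_limit[OF f s(2)] x(2) by simp
  then show "\<exists>s. (\<forall>n. s n \<in> f ` D) \<and> limitin Y s y sequentially"
    using s(1) by (intro exI[of _ "f \<circ> s"]) auto
qed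

lemma seq_separable_continuous_image:
  assumes "continuous_map X Y f" "f ` topspace X = topspace Y" "seq_separable X"
  shows "seq_separable Y"
proof -
  obtain D where "countable D" "seq_dense X D"
    using assms(3) unfolding seq_separable_def by blast
  then show ?thesis
    unfolding seq_separable_def
    by (intro exI[of _ "f ` D"] conjI countable_image seq_dense_continuous_image[OF assms(1,2)])
qed

lemma homeomorphic_space_seq_separable:
  assumes "X homeomorphic_space Y" "seq_separable X"
  shows "seq_separable Y"
proof -
  obtain f where "homeomorphic_map X Y f"
    using assms(1) unfolding homeomorphic_space by blast
  then show ?thesis
    by (intro seq_separable_continuous_image[OF _ _ assms(2)]
        homeomorphic_imp_continuous_map homeomorphic_imp_surjective_map)
qed

lemma homeomorphic_space_selectively_seq_separable:
  assumes "X homeomorphic_space Y" and sel: "selectively_seq_separable X"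
  shows "selectively_seq_separable Y"
  unfolding selectively_seq_separable_def
proof (intro allI impI)
  obtain f g where "homeomorphic_maps X Y f g"
    using assms(1) unfolding homeomorphic_space_def by blast
  then have f: "homeomorphic_map X Y f" and g: "homeomorphic_map Y X g"
    and fg: "\<And>y. y \<in> topspace Y \<Longrightarrow> f (g y) = y"
    by (auto simp: homeomorphic_maps_map)
  fix D :: "nat \<Rightarrow> 'b set" assume D: "\<forall>n. seq_dense Y (D n)"
  have "\<forall>n. seq_dense X (g ` D n)"
    using D seq_dense_continuous_image[OF homeomorphic_imp_continuous_map[OF g]
        homeomorphic_imp_surjective_map[OF g]] by simp
  then obtain F where F: "\<And>n. finite (F n) \<and> F n \<subseteq> g ` D n"
    and dense: "seq_dense X (\<Union>n. F n)"
    using sel[unfolded selectively_seq_separable_def, rule_format, of "\<lambda>n. g ` D n"] by blast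
  have "f ` F n \<subseteq> D n" for n
  proof
    fix y assume "y \<in> f ` F n"
    then obtain z where "z \<in> D n" "y = f (g z)"
      using F by blast
    moreover have "z \<in> topspace Y"
      using D \<open>z \<in> D n\<close> unfolding seq_dense_def by blast
    ultimately show "y \<in> D n"
      using fg by simp
  qed
  then have "finite (f ` F n) \<and> f ` F n \<subseteq> D n" for n
    using F by simp
  moreover have "seq_dense Y (\<Union>n. f ` F n)"
    using seq_dense_continuous_image[OF homeomorphic_imp_continuous_map[OF f]
        homeomorphic_imp_surjective_map[OF f] dense] by (simp add: image_UN)
  ultimately show "\<exists>F. (\<forall>n. finite (F n) \<and> F n \<subseteq> D n) \<and> seq_dense Y (\<Union>n. F n)"
    by (intro exI[of _ "\<lambda>n. f ` F n"]) simp
qed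

lemma homeomorphic_space_on_type:
  fixes X :: "'a topology"
  assumes "topspace X \<lesssim> (UNIV :: 'b set)"
  shows "\<exists>Y :: 'b topology. X homeomorphic_space Y"
proof -
  obtain h :: "'a \<Rightarrow> 'b" where inj: "inj_on h (topspace X)"
    using assms unfolding lepoll_def by blast
  define g where "g = inv_into (topspace X) h"
  define Y where "Y = pullback_topology (h ` topspace X) g X"
  have "continuous_map Y X g"
    using continuous_map_pullback[OF continuous_map_id, of "h ` topspace X" g]
    unfolding Y_def by (simp add: o_def)
  moreover have "continuous_map X X (g \<circ> h)"
    by (rule continuous_map_eq[OF continuous_map_id]) (simp add: g_def inv_into_f_f[OF inj])
  then have "continuous_map X Y h"
    unfolding Y_def by (rule continuous_map_pullback') auto
  moreover have "topspace Y = h ` topspace X"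
    unfolding Y_def topspace_pullback_topology g_def using inj by auto
  ultimately have "homeomorphic_maps X Y h g"
    unfolding homeomorphic_maps_def using inj g_def by auto
  then show ?thesis
    using homeomorphic_maps_imp_homeomorphic_space by blast
qed

definition cantor_cube :: "'a set \<Rightarrow> ('a \<Rightarrow> bool) topology" where
  "cantor_cube I = product_topology (\<lambda>_. discrete_topology UNIV) I"

lemma topspace_cantor_cube [simp]: "topspace (cantor_cube I) = I \<rightarrow>\<^sub>E UNIV"
  by (simp add: cantor_cube_def topspace_product_topology)

lemma compact_space_cantor_cube: "compact_space (cantor_cube I)"
  by (simp add: cantor_cube_def compact_space_product_topology compact_space_discrete_topology)

lemma Hausdorff_space_cantor_cube: "Hausdorff_space (cantor_cube I)"
  by (simp add: cantor_cube_def Hausdorff_space_product_topology)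

lemma limitin_discrete_topology:
  "limitin (discrete_topology U) f l F \<longleftrightarrow> l \<in> U \<and> eventually (\<lambda>x. f x = l) F"
proof
  assume L: "limitin (discrete_topology U) f l F"
  then have "l \<in> U"
    by (simp add: limitin_def)
  then have "eventually (\<lambda>x. f x \<in> {l}) F"
    using L[unfolded limitin_def, THEN conjunct2, rule_format, of "{l}"] by simp
  with \<open>l \<in> U\<close> show "l \<in> U \<and> eventually (\<lambda>x. f x = l) F"
    by simp
next
  assume "l \<in> U \<and> eventually (\<lambda>x. f x = l) F"
  then show "limitin (discrete_topology U) f l F"
    unfolding limitin_def by (auto elim: eventually_mono)
qed

lemma limitin_cantor_cube_iff:
  assumes "\<And>k. s k \<in> topspace (cantor_cube I)" "l \<in> topspace (cantor_cube I)"
  shows "limitin (cantor_cube I) s l sequentially \<longleftrightarrow>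
           (\<forall>i\<in>I. eventually (\<lambda>k. s k i = l i) sequentially)"
  using assms by (simp add: cantor_cube_def limitin_componentwise limitin_discrete_topology PiE_iff)

lemma countable_base_sequenceE:
  obtains b :: "nat \<Rightarrow> 'a::second_countable_topology set"
  where "\<And>S x. open S \<Longrightarrow> x \<in> S \<Longrightarrow> \<exists>i. x \<in> b i \<and> b i \<subseteq> S"
proof -
  obtain \<B> :: "'a set set" where "countable \<B>" and basis: "topological_basis \<B>"
    using ex_countable_basis by blast
  moreover have "\<B> \<noteq> {}"
    using topological_basisE[OF basis open_UNIV UNIV_I] by blast
  ultimately have range: "range (from_nat_into \<B>) = \<B>"
    by simp
  show thesis
  proof (rule that)
    fix S :: "'a set" and x assume "open S" "x \<in> S"
    then obtain B where "B \<in> \<B>" "x \<in> B" "B \<subseteq> S"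
      by (rule topological_basisE[OF basis])
    moreover obtain i where "B = from_nat_into \<B> i"
      using \<open>B \<in> \<B>\<close> range by (metis rangeE)
    ultimately show "\<exists>i. x \<in> from_nat_into \<B> i \<and> from_nat_into \<B> i \<subseteq> S"
      by auto
  qed
qed

lemma countable_inner_approximation:
  obtains \<C> :: "'a::second_countable_topology set set" and approx :: "nat \<Rightarrow> 'a set \<Rightarrow> 'a set"
  where "countable \<C>" "\<And>k W. approx k W \<in> \<C>" "\<And>k W. approx k W \<subseteq> W"
    "\<And>W x. open W \<Longrightarrow> x \<in> W \<Longrightarrow> eventually (\<lambda>k. x \<in> approx k W) sequentially"
proof -
  obtain b :: "nat \<Rightarrow> 'a set" where b: "\<And>S x. open S \<Longrightarrow> x \<in> S \<Longrightarrow> \<exists>i. x \<in> b i \<and> b i \<subseteq> S"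
    using countable_base_sequenceE by blast
  define approx where "approx k W = \<Union>(b ` {i. i < k \<and> b i \<subseteq> W})" for k W
  show thesis
  proof (rule that)
    show "countable ((\<lambda>I. \<Union>(b ` I)) ` Collect finite)"
      by (simp add: countable_Collect_finite)
    show "approx k W \<in> (\<lambda>I. \<Union>(b ` I)) ` Collect finite" for k W
      unfolding approx_def by (rule imageI) simp
    show "approx k W \<subseteq> W" for k W
      unfolding approx_def by blast
    show "eventually (\<lambda>k. x \<in> approx k W) sequentially" if W: "open W" "x \<in> W" for W x
    proof -
      obtain i where "x \<in> b i" "b i \<subseteq> W"
        using b[OF W] by blast
      then show ?thesis
        unfolding approx_def eventually_sequentially by (intro exI[of _ "Suc i"]) (auto intro!: exI[of _ i])
    qed
  qed
qed

definition switch_set :: "nat \<Rightarrow> (nat \<Rightarrow> 'a set) \<Rightarrow> (nat \<Rightarrow> 'a set) \<Rightarrow> 'a set" where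
  "switch_set k U V = {x. \<exists>m\<le>k. x \<notin> V m \<and> (\<forall>j\<le>m. x \<in> U j)}"

lemma countable_switch_sets:
  assumes "countable \<C>"
  shows "countable {switch_set k U V | k U V. range U \<subseteq> \<C> \<and> range V \<subseteq> \<C>}"
proof (rule countable_subset)
  show "countable (\<Union>k. (\<lambda>(U, V). switch_set k U V) ` (({..k} \<rightarrow>\<^sub>E \<C>) \<times> ({..k} \<rightarrow>\<^sub>E \<C>)))"
    using assms by (intro countable_UN countable_image countable_SIGMA countable_PiE) auto
  show "{switch_set k U V | k U V. range U \<subseteq> \<C> \<and> range V \<subseteq> \<C>} \<subseteq>
      (\<Union>k. (\<lambda>(U, V). switch_set k U V) ` (({..k} \<rightarrow>\<^sub>E \<C>) \<times> ({..k} \<rightarrow>\<^sub>E \<C>)))"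
  proof safe
    fix k :: nat and U V :: "nat \<Rightarrow> 'a set"
    assume "range U \<subseteq> \<C>" "range V \<subseteq> \<C>"
    then have "(restrict U {..k}, restrict V {..k}) \<in> ({..k} \<rightarrow>\<^sub>E \<C>) \<times> ({..k} \<rightarrow>\<^sub>E \<C>)"
      by auto
    moreover have "switch_set k U V = switch_set k (restrict U {..k}) (restrict V {..k})"
      unfolding switch_set_def by auto
    ultimately have "switch_set k U V \<in>
        (\<lambda>(U, V). switch_set k U V) ` (({..k} \<rightarrow>\<^sub>E \<C>) \<times> ({..k} \<rightarrow>\<^sub>E \<C>))"
      by (metis (no_types, lifting) case_prod_conv image_eqI)
    then show "switch_set k U V \<in>
        (\<Union>k. (\<lambda>(U, V). switch_set k U V) ` (({..k} \<rightarrow>\<^sub>E \<C>) \<times> ({..k} \<rightarrow>\<^sub>E \<C>)))"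
      by (rule UN_I[OF UNIV_I])
  qed
qed

lemma eventually_mem_switch_set:
  assumes "\<And>j. eventually (\<lambda>k. x \<in> U k j) sequentially" and "\<And>k. x \<notin> V k m"
  shows "eventually (\<lambda>k. x \<in> switch_set k (U k) (V k)) sequentially"
proof -
  have "eventually (\<lambda>k. m \<le> k \<and> (\<forall>j\<in>{..m}. x \<in> U k j)) sequentially"
    using assms(1) by (intro eventually_conj eventually_ge_at_top eventually_ball_finite) auto
  then show ?thesis
    by (rule eventually_mono) (use assms(2) in \<open>auto simp: switch_set_def\<close>)
qed

lemma eventually_not_mem_switch_set:
  assumes "\<And>j. eventually (\<lambda>k. x \<in> V k j) sequentially" and "\<And>k. x \<notin> U k m"
  shows "eventually (\<lambda>k. x \<notin> switch_set k (U k) (V k)) sequentially"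
proof -
  have "eventually (\<lambda>k. \<forall>j\<in>{..<m}. x \<in> V k j) sequentially"
    using assms(1) by (intro eventually_ball_finite) auto
  then show ?thesis
  proof (rule eventually_mono)
    fix k assume V: "\<forall>j\<in>{..<m}. x \<in> V k j"
    show "x \<notin> switch_set k (U k) (V k)"
    proof
      assume "x \<in> switch_set k (U k) (V k)"
      then obtain m' where "x \<notin> V k m'" "\<forall>j\<le>m'. x \<in> U k j"
        unfolding switch_set_def by blast
      then show False
        using V assms(2)[of k] by (cases "m' < m") auto
    qed
  qed
qed

lemma eventually_switch_set_approx_iff:
  assumes approx_subset: "\<And>k W. approx k W \<subseteq> W"
    and approx_eventually: "\<And>W x. open W \<Longrightarrow> x \<in> W \<Longrightarrow> eventually (\<lambda>k. x \<in> approx k W) sequentially"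
    and U: "\<And>n. open (U n)" and V: "\<And>n. open (V n)"
    and x: "x \<in> (\<Inter>n. U n) \<longleftrightarrow> x \<notin> (\<Inter>n. V n)"
  shows "eventually (\<lambda>k. x \<in> switch_set k (\<lambda>j. approx k (U j)) (\<lambda>j. approx k (V j))
           \<longleftrightarrow> x \<in> (\<Inter>n. U n)) sequentially"
proof (cases "x \<in> (\<Inter>n. U n)")
  case True
  then obtain m where "x \<notin> V m"
    using x by blast
  have "eventually (\<lambda>k. x \<in> approx k (U j)) sequentially" for j
    using approx_eventually[OF U] True by blast
  moreover have "x \<notin> approx k (V m)" for k
    using approx_subset \<open>x \<notin> V m\<close> by blast
  ultimately have "eventually (\<lambda>k. x \<in> switch_set k (\<lambda>j. approx k (U j)) (\<lambda>j. approx k (V j))) sequentially"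
    by (rule eventually_mem_switch_set[where U="\<lambda>k j. approx k (U j)" and V="\<lambda>k j. approx k (V j)"])
  then show ?thesis
    by (rule eventually_mono) (use True in simp)
next
  case False
  then obtain m where "x \<notin> U m"
    by blast
  have "eventually (\<lambda>k. x \<in> approx k (V j)) sequentially" for j
    using approx_eventually[OF V] False x by blast
  moreover have "x \<notin> approx k (U m)" for k
    using approx_subset \<open>x \<notin> U m\<close> by blast
  ultimately have "eventually (\<lambda>k. x \<notin> switch_set k (\<lambda>j. approx k (U j)) (\<lambda>j. approx k (V j))) sequentially"
    by (rule eventually_not_mem_switch_set[where U="\<lambda>k j. approx k (U j)" and V="\<lambda>k j. approx k (V j)"])
  then show ?thesis
    by (rule eventually_mono) (use False in simp)
qed

lemma seq_separable_cantor_cube: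
  fixes X :: "'a::second_countable_topology set"
  assumes Gdelta: "\<And>A. A \<subseteq> X \<Longrightarrow> \<exists>U :: nat \<Rightarrow> 'a set. (\<forall>n. open (U n)) \<and> A = X \<inter> (\<Inter>n. U n)"
  shows "seq_separable (cantor_cube X)"
proof -
  obtain \<C> :: "'a set set" and approx where "countable \<C>" and approx: "\<And>k W. approx k W \<in> \<C>"
    "\<And>k W. approx k W \<subseteq> W"
    "\<And>W x. open W \<Longrightarrow> x \<in> W \<Longrightarrow> eventually (\<lambda>k. x \<in> approx k W) sequentially"
    using countable_inner_approximation by blast
  define \<S> where "\<S> = {switch_set k U V | k U V. range U \<subseteq> \<C> \<and> range V \<subseteq> \<C>}"
  define D where "D = (\<lambda>S. restrict (\<lambda>x. x \<in> S) X) ` \<S>"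
  have "countable D"
    unfolding D_def \<S>_def using countable_switch_sets[OF \<open>countable \<C>\<close>] by (rule countable_image)
  moreover have "seq_dense (cantor_cube X) D"
    unfolding seq_dense_def
  proof (intro conjI ballI)
    show "D \<subseteq> topspace (cantor_cube X)"
      unfolding D_def by auto
    fix \<psi> assume \<psi>: "\<psi> \<in> topspace (cantor_cube X)"
    obtain U :: "nat \<Rightarrow> 'a set" where U: "\<And>n. open (U n)" "{x\<in>X. \<psi> x} = X \<inter> (\<Inter>n. U n)"
      using Gdelta[of "{x\<in>X. \<psi> x}"] by blast
    obtain V :: "nat \<Rightarrow> 'a set" where V: "\<And>n. open (V n)" "{x\<in>X. \<not> \<psi> x} = X \<inter> (\<Inter>n. V n)"
      using Gdelta[of "{x\<in>X. \<not> \<psi> x}"] by blast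
    define s where
      "s k = restrict (\<lambda>x. x \<in> switch_set k (\<lambda>j. approx k (U j)) (\<lambda>j. approx k (V j))) X" for k
    have "s k \<in> D" for k
      unfolding s_def D_def \<S>_def by (rule imageI) (use approx(1) in blast)
    moreover have "eventually (\<lambda>k. s k x = \<psi> x) sequentially" if "x \<in> X" for x
    proof -
      have "x \<in> (\<Inter>n. U n) \<longleftrightarrow> \<psi> x" "x \<in> (\<Inter>n. V n) \<longleftrightarrow> \<not> \<psi> x"
        using U(2) V(2) \<open>x \<in> X\<close> by blast+
      then have "eventually (\<lambda>k. x \<in> switch_set k (\<lambda>j. approx k (U j)) (\<lambda>j. approx k (V j))
          \<longleftrightarrow> \<psi> x) sequentially"
        using eventually_switch_set_approx_iff[where U=U and V=V and x=x, OF approx(2,3) U(1) V(1)]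
        by simp
      then show ?thesis
        by (rule eventually_mono) (simp add: s_def \<open>x \<in> X\<close>)
    qed
    moreover have "s k \<in> topspace (cantor_cube X)" for k
      by (simp add: s_def)
    ultimately show "\<exists>s. (\<forall>k. s k \<in> D) \<and> limitin (cantor_cube X) s \<psi> sequentially"
      using limitin_cantor_cube_iff[of s X \<psi>] \<psi> by blast
  qed
  ultimately show ?thesis
    unfolding seq_separable_def by blast
qed

lemma topspace_cantor_cube_lepoll_reals:
  fixes X :: "'a::second_countable_topology set"
  assumes Gdelta: "\<And>A. A \<subseteq> X \<Longrightarrow> \<exists>U :: nat \<Rightarrow> 'a set. (\<forall>n. open (U n)) \<and> A = X \<inter> (\<Inter>n. U n)"
  shows "topspace (cantor_cube X) \<lesssim> (UNIV :: real set)"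
proof -
  obtain b :: "nat \<Rightarrow> 'a set" where b: "\<And>S x. open S \<Longrightarrow> x \<in> S \<Longrightarrow> \<exists>i. x \<in> b i \<and> b i \<subseteq> S"
    using countable_base_sequenceE by blast
  have open_eq: "W = \<Union>(b ` {i. b i \<subseteq> W})" if "open W" for W
    using b[OF that] by blast
  have "\<forall>\<phi>. \<exists>U :: nat \<Rightarrow> 'a set. (\<forall>n. open (U n)) \<and> {x\<in>X. \<phi> x} = X \<inter> (\<Inter>n. U n)"
    by (intro allI Gdelta) blast
  then obtain U :: "('a \<Rightarrow> bool) \<Rightarrow> nat \<Rightarrow> 'a set"
    where U: "\<And>\<phi> n. open (U \<phi> n)" "\<And>\<phi>. {x\<in>X. \<phi> x} = X \<inter> (\<Inter>n. U \<phi> n)"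
    by metis
  define code where "code \<phi> = prod_encode ` {(n, i). b i \<subseteq> U \<phi> n}" for \<phi>
  have "inj_on code (topspace (cantor_cube X))"
  proof (rule inj_onI)
    fix \<phi> \<psi> assume \<phi>: "\<phi> \<in> topspace (cantor_cube X)" and \<psi>: "\<psi> \<in> topspace (cantor_cube X)"
      and "code \<phi> = code \<psi>"
    then have "{(n, i). b i \<subseteq> U \<phi> n} = {(n, i). b i \<subseteq> U \<psi> n}"
      unfolding code_def by (simp add: inj_image_eq_iff inj_prod_encode)
    then have "{i. b i \<subseteq> U \<phi> n} = {i. b i \<subseteq> U \<psi> n}" for n
      by (simp add: set_eq_iff)
    then have "U \<phi> n = U \<psi> n" for n
      using open_eq[OF U(1)[of \<phi> n]] open_eq[OF U(1)[of \<psi> n]] by metis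
    then have "{x\<in>X. \<phi> x} = {x\<in>X. \<psi> x}"
      using U(2) by simp
    then show "\<phi> = \<psi>"
      using \<phi> \<psi> by (intro extensionalityI[of _ X]) (auto simp: PiE_iff)
  qed
  then have "topspace (cantor_cube X) \<lesssim> (UNIV :: nat set set)"
    unfolding lepoll_def by blast
  also have "\<dots> \<approx> (UNIV :: real set)"
    by (rule nat_sets_eqpoll_reals)
  finally show ?thesis .
qed

lemma unbounded_family_infinite:
  assumes "unbounded_family F"
  shows "infinite F"
proof
  assume "finite F"
  have "le_star f (\<lambda>n. \<Sum>g\<in>F. g n)" if "f \<in> F" for f
    unfolding le_star_def
    using member_le_sum[where f="\<lambda>g. g n" and i=f and A=F for n] \<open>finite F\<close> that
    by (simp add: always_eventually)
  then show False
    using assms unfolding unbounded_family_def by blast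
qed

definition nonzero_with_bounded_zeros :: "'a set \<Rightarrow> ('a \<Rightarrow> nat \<Rightarrow> nat) \<Rightarrow> nat \<Rightarrow> ('a \<Rightarrow> bool) set"
  where "nonzero_with_bounded_zeros X e n =
    {\<phi> \<in> topspace (cantor_cube X). (\<exists>x\<in>X. \<phi> x) \<and> (\<exists>c. \<forall>x\<in>X. \<not> \<phi> x \<longrightarrow> (\<forall>j\<le>n. e x j < c))}"

lemma seq_dense_nonzero_with_bounded_zeros:
  assumes "infinite X"
  shows "seq_dense (cantor_cube X) (nonzero_with_bounded_zeros X e n)"
  unfolding seq_dense_def
proof (intro conjI ballI)
  show "nonzero_with_bounded_zeros X e n \<subseteq> topspace (cantor_cube X)"
    unfolding nonzero_with_bounded_zeros_def by blast
  fix \<psi> assume \<psi>: "\<psi> \<in> topspace (cantor_cube X)"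
  obtain xs :: "nat \<Rightarrow> 'a" where "inj xs" "range xs \<subseteq> X"
    using infinite_countable_subset[OF assms] by blast
  \<comment> \<open>The point \<open>xs m\<close> keeps \<open>s m\<close> nonzero; as \<open>xs\<close> is injective it does not affect the limit.\<close>
  define s where "s m = restrict (\<lambda>x. \<psi> x \<or> x = xs m \<or> (\<exists>j\<le>n. m \<le> e x j)) X" for m
  have "s m \<in> nonzero_with_bounded_zeros X e n" for m
  proof -
    have "\<exists>x\<in>X. s m x"
      using \<open>range xs \<subseteq> X\<close> unfolding s_def by auto
    moreover have "\<forall>x\<in>X. \<not> s m x \<longrightarrow> (\<forall>j\<le>n. e x j < m)"
      unfolding s_def by (auto simp: not_le) (metis leD)
    ultimately show ?thesis
      unfolding nonzero_with_bounded_zeros_def by (auto simp: s_def)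
  qed
  moreover have "eventually (\<lambda>m. s m x = \<psi> x) sequentially" if "x \<in> X" for x
  proof -
    have "finite (xs -` {x})"
      using \<open>inj xs\<close> by (intro finite_vimageI) auto
    then have "eventually (\<lambda>m. xs m \<noteq> x) sequentially"
      by (simp add: cofinite_eq_sequentially[symmetric] eventually_cofinite vimage_def)
    moreover have "eventually (\<lambda>m. \<forall>j\<in>{..n}. e x j < m) sequentially"
      by (intro eventually_ball_finite) (auto intro: eventually_gt_at_top)
    ultimately show ?thesis
    proof eventually_elim
      case (elim m)
      then have "\<not> (\<exists>j\<le>n. m \<le> e x j)"
        by (auto simp: not_le)
      with elim show ?case
        by (auto simp: s_def that)
    qed
  qed
  moreover have "s m \<in> topspace (cantor_cube X)" for m
    by (simp add: s_def)
  ultimately show "\<exists>s. (\<forall>m. s m \<in> nonzero_with_bounded_zeros X e n) \<and>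
      limitin (cantor_cube X) s \<psi> sequentially"
    using limitin_cantor_cube_iff[of s X \<psi>] \<psi> by blast
qed

lemma finite_subset_nonzero_with_bounded_zeros:
  assumes "finite F" "F \<subseteq> nonzero_with_bounded_zeros X e n"
  shows "\<exists>c. \<forall>\<phi>\<in>F. \<forall>x\<in>X. \<not> \<phi> x \<longrightarrow> (\<forall>j\<le>n. e x j < c)"
proof -
  have "\<forall>\<phi>\<in>F. \<exists>c. \<forall>x\<in>X. \<not> \<phi> x \<longrightarrow> (\<forall>j\<le>n. e x j < c)"
    using assms(2) unfolding nonzero_with_bounded_zeros_def by blast
  then obtain c where c: "\<And>\<phi>. \<phi> \<in> F \<Longrightarrow> \<forall>x\<in>X. \<not> \<phi> x \<longrightarrow> (\<forall>j\<le>n. e x j < c \<phi>)"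
    by metis
  have "c \<phi> \<le> Max (c ` F)" if "\<phi> \<in> F" for \<phi>
    using assms(1) that by simp
  then show ?thesis
    using c by (intro exI[of _ "Max (c ` F)"]) (meson order_less_le_trans)
qed

lemma finite_range_not_eventually_zero:
  assumes "finite (range s)" and nonzero: "\<And>k. \<exists>x\<in>X. s k x"
  shows "\<exists>x\<in>X. \<not> eventually (\<lambda>k. \<not> s k x) sequentially"
proof (rule ccontr)
  assume "\<not> ?thesis"
  then have zero: "\<forall>x\<in>X. eventually (\<lambda>k. \<not> s k x) sequentially"
    by blast
  have "\<forall>\<phi>\<in>range s. \<exists>x\<in>X. \<phi> x"
    using nonzero by blast
  then obtain w where w: "\<And>\<phi>. \<phi> \<in> range s \<Longrightarrow> w \<phi> \<in> X \<and> \<phi> (w \<phi>)"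
    by metis
  have "eventually (\<lambda>k. \<forall>\<phi>\<in>range s. \<not> s k (w \<phi>)) sequentially"
    using zero w by (intro eventually_ball_finite[OF assms(1)]) blast
  then obtain k where "\<forall>\<phi>\<in>range s. \<not> s k (w \<phi>)"
    by (auto simp: eventually_sequentially)
  then show False
    using w[of "s k"] by auto
qed

lemma le_star_of_eventually_bounded_prefixes:
  fixes N b f :: "nat \<Rightarrow> nat"
  assumes N: "\<And>n. \<exists>k. n \<le> N k"
    and bound: "eventually (\<lambda>k. \<forall>j\<le>N k. f j < b k) sequentially"
  shows "le_star f (\<lambda>n. b (LEAST k. n \<le> N k))"
proof -
  obtain K where K: "\<And>k. K \<le> k \<Longrightarrow> \<forall>j\<le>N k. f j < b k"
    using bound by (auto simp: eventually_sequentially)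
  define M where "M = Max (N ` {..<K})"
  have "f n \<le> b (LEAST k. n \<le> N k)" if "M < n" for n
  proof -
    let ?k = "LEAST k. n \<le> N k"
    have "n \<le> N ?k"
      using N by (rule LeastI_ex)
    moreover have "K \<le> ?k"
    proof (rule ccontr)
      assume "\<not> K \<le> ?k"
      then have "N ?k \<le> M"
        unfolding M_def by (intro Max_ge) auto
      then show False
        using \<open>n \<le> N ?k\<close> \<open>M < n\<close> by simp
    qed
    ultimately show ?thesis
      using K by fastforce
  qed
  then show ?thesis
    unfolding le_star_def eventually_sequentially by (intro exI[of _ "Suc M"]) auto
qed

lemma selection_from_nonzero_with_bounded_zeros_not_tendsto_zero:
  assumes unbounded: "unbounded_family (e ` X)"
    and F: "\<And>n. finite (F n) \<and> F n \<subseteq> nonzero_with_bounded_zeros X e n"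
    and s: "\<And>k. s k \<in> (\<Union>n. F n)"
  shows "\<exists>x\<in>X. \<not> eventually (\<lambda>k. \<not> s k x) sequentially"
proof (rule ccontr)
  assume "\<not> ?thesis"
  then have to_zero: "\<forall>x\<in>X. eventually (\<lambda>k. \<not> s k x) sequentially"
    by blast
  have "\<forall>k. \<exists>n. s k \<in> F n"
    using s by blast
  then obtain N where N: "\<And>k. s k \<in> F (N k)"
    by metis
  have "s k \<in> nonzero_with_bounded_zeros X e (N k)" for k
    using F N by blast
  then have nonzero: "\<exists>x\<in>X. s k x" for k
    unfolding nonzero_with_bounded_zeros_def by blast
  have "\<forall>n. \<exists>c. \<forall>\<phi>\<in>F n. \<forall>x\<in>X. \<not> \<phi> x \<longrightarrow> (\<forall>j\<le>n. e x j < c)"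
    using F by (intro allI finite_subset_nonzero_with_bounded_zeros) auto
  then obtain c where c: "\<And>n. \<forall>\<phi>\<in>F n. \<forall>x\<in>X. \<not> \<phi> x \<longrightarrow> (\<forall>j\<le>n. e x j < c n)"
    by metis
  show False
  proof (cases "\<exists>n. \<forall>k. N k \<le> n")
    case True
    then obtain n where "\<And>k. N k \<le> n"
      by blast
    then have "range s \<subseteq> (\<Union>m\<le>n. F m)"
      using N by blast
    then have "finite (range s)"
      by (rule finite_subset) (use F in auto)
    then show False
      using finite_range_not_eventually_zero nonzero to_zero by blast
  next
    case False
    then have "\<And>n. \<exists>k. n \<le> N k"
      by (meson nle_le)
    then have "le_star (e x) (\<lambda>n. c (N (LEAST k. n \<le> N k)))" if "x \<in> X" for x
    proof (rule le_star_of_eventually_bounded_prefixes[where b="\<lambda>k. c (N k)"])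
      have "eventually (\<lambda>k. \<not> s k x) sequentially"
        using to_zero that by blast
      then show "eventually (\<lambda>k. \<forall>j\<le>N k. e x j < c (N k)) sequentially"
        by (rule eventually_mono) (use c[rule_format, OF N that] in blast)
    qed
    then show False
      using unbounded unfolding unbounded_family_def by blast
  qed
qed

lemma not_selectively_seq_separable_cantor_cube:
  assumes unbounded: "unbounded_family (e ` X)"
  shows "\<not> selectively_seq_separable (cantor_cube X)"
proof
  assume sel: "selectively_seq_separable (cantor_cube X)"
  have "infinite X"
    using unbounded_family_infinite[OF unbounded] by blast
  then have "\<forall>n. seq_dense (cantor_cube X) (nonzero_with_bounded_zeros X e n)"
    by (simp add: seq_dense_nonzero_with_bounded_zeros)
  then obtain F where F: "\<And>n. finite (F n) \<and> F n \<subseteq> nonzero_with_bounded_zeros X e n"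
    and dense: "seq_dense (cantor_cube X) (\<Union>n. F n)"
    using sel[unfolded selectively_seq_separable_def, rule_format,
        of "nonzero_with_bounded_zeros X e"] by blast
  define zero where "zero = restrict (\<lambda>_. False) X"
  have "zero \<in> topspace (cantor_cube X)"
    by (simp add: zero_def)
  then obtain s where s: "\<And>k. s k \<in> (\<Union>n. F n)" and "limitin (cantor_cube X) s zero sequentially"
    using dense unfolding seq_dense_def by blast
  moreover have "s k \<in> topspace (cantor_cube X)" for k
    using s dense unfolding seq_dense_def by blast
  ultimately have "\<forall>x\<in>X. eventually (\<lambda>k. \<not> s k x) sequentially"
    using limitin_cantor_cube_iff[of s X zero] \<open>zero \<in> topspace (cantor_cube X)\<close>
    by (simp add: zero_def)
  then show False
    using selection_from_nonzero_with_bounded_zeros_not_tendsto_zero[where s=s, OF unbounded F s] by blast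
qed

theorem theorem5p1:
  assumes "b_less_q"
  shows "\<exists>T :: real topology. compact_space T \<and> Hausdorff_space T \<and>
           seq_separable T \<and> \<not> selectively_seq_separable T"
proof -
  obtain F :: "(nat \<Rightarrow> nat) set" where unbounded: "unbounded_family F"
    and Q_sets: "\<And>Y :: (nat \<Rightarrow> nat) set. (card_of Y, card_of F) \<in> ordLeq \<Longrightarrow>
        \<exists>X :: real set. Q_set X \<and> (card_of X, card_of Y) \<in> ordIso"
    using assms unfolding b_less_q_def by blast
  obtain X :: "real set" where "Q_set X" and "(card_of X, card_of F) \<in> ordIso"
    using Q_sets[OF ordIso_imp_ordLeq[OF card_of_refl]] by blast
  then obtain e where "bij_betw e X F"
    using card_of_ordIso by blast
  then have "unbounded_family (e ` X)"
    using unbounded by (simp add: bij_betw_def)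
  then have not_sel: "\<not> selectively_seq_separable (cantor_cube X)"
    by (rule not_selectively_seq_separable_cantor_cube)
  have Gdelta: "\<And>A. A \<subseteq> X \<Longrightarrow> \<exists>U :: nat \<Rightarrow> real set. (\<forall>n. open (U n)) \<and> A = X \<inter> (\<Inter>n. U n)"
    using \<open>Q_set X\<close> unfolding Q_set_def by blast
  then obtain T :: "real topology" where hom: "cantor_cube X homeomorphic_space T"
    using homeomorphic_space_on_type[OF topspace_cantor_cube_lepoll_reals] by blast
  have "compact_space T"
    using homeomorphic_compact_space[OF hom] compact_space_cantor_cube by blast
  moreover have "Hausdorff_space T"
    using homeomorphic_Hausdorff_space[OF hom] Hausdorff_space_cantor_cube by blast
  moreover have "seq_separable T"
    using homeomorphic_space_seq_separable[OF hom seq_separable_cantor_cube[OF Gdelta]] .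
  moreover have "\<not> selectively_seq_separable T"
    using homeomorphic_space_selectively_seq_separable[OF homeomorphic_space_sym[THEN iffD1, OF hom]]
      not_sel by blast
  ultimately show ?thesis
    by blast
qed

end
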